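(* Consider an inflationary tessellation of $\mathbb{R}^d$ with $N$ types of tiles, where tiles are of the same type exactly when they have the same measure, and with multiplier $\rho\,O$ ($\rho>1$ real, $O$ orthogonal). Then $\rho$ is an algebraic integer of degree at most $Nd$.
   Context: Let $m$ be Lebesgue measure on $\mathbb{R}^d$. Two measurable sets are essentially disjoint if their intersection has measure $0$. A tile is a measurable subset of $\mathbb{R}^d$ of finite positive measure. A tessellation of $\mathbb{R}^d$ consists of finitely many types of tiles together with a covering of $\mathbb{R}^d$ by pairwise essentially disjoint tiles each of one of the types. If $R_1,\dots,R_N$ are representatives of the types, the tessellation is inflationary with multiplier $\rho O$ if for each $i$ the set $\rho\,O(R_i)$ is a union of essentially disjoint tiles of the given types. *)

theory Defs
  imports "HOL-Analysis.Analysis" "HOL-Computational_Algebra.Polynomial"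
begin

definition is_tile :: "('a::euclidean_space) set \<Rightarrow> bool" where
  "is_tile S \<longleftrightarrow> S \<in> sets lebesgue \<and> 0 < emeasure lebesgue S \<and> emeasure lebesgue S < \<infinity>"

definition ess_disjoint :: "('a::euclidean_space) set \<Rightarrow> 'a set \<Rightarrow> bool" where
  "ess_disjoint S T \<longleftrightarrow> S \<inter> T \<in> null_sets lebesgue"

definition pairwise_ess_disjoint :: "('a::euclidean_space) set set \<Rightarrow> bool" where
  "pairwise_ess_disjoint \<F> \<longleftrightarrow> (\<forall>S\<in>\<F>. \<forall>T\<in>\<F>. S \<noteq> T \<longrightarrow> ess_disjoint S T)"

text \<open>Tile types are given abstractly: tp i S means "S is a tile of type i", for i < N.\<close>
definition tile_types :: "nat \<Rightarrow> (nat \<Rightarrow> ('a::euclidean_space) set \<Rightarrow> bool) \<Rightarrow> bool" where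
  "tile_types N tp \<longleftrightarrow> (\<forall>i<N. \<forall>S. tp i S \<longrightarrow> is_tile S)"

definition tessellation ::
  "nat \<Rightarrow> (nat \<Rightarrow> ('a::euclidean_space) set \<Rightarrow> bool) \<Rightarrow> 'a set set \<Rightarrow> bool" where
  "tessellation N tp \<T> \<longleftrightarrow>
     tile_types N tp \<and>
     \<Union>\<T> = UNIV \<and> pairwise_ess_disjoint \<T> \<and> (\<forall>S\<in>\<T>. \<exists>i<N. tp i S)"

definition inflationary ::
  "nat \<Rightarrow> (nat \<Rightarrow> ('a::euclidean_space) set \<Rightarrow> bool) \<Rightarrow> (nat \<Rightarrow> 'a set) \<Rightarrow> real \<Rightarrow> ('a \<Rightarrow> 'a) \<Rightarrow> bool" where
  "inflationary N tp R \<rho> Ot \<longleftrightarrow>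
     (\<forall>i<N. tp i (R i)) \<and>
     (\<forall>i<N. \<exists>\<S>. pairwise_ess_disjoint \<S> \<and> (\<forall>S\<in>\<S>. \<exists>j<N. tp j S) \<and>
                 \<Union>\<S> = (\<lambda>x. \<rho> *\<^sub>R Ot x) ` R i)"

definition alg_degree :: "real \<Rightarrow> nat" where
  "alg_degree x = (LEAST n. \<exists>p :: real poly. (\<forall>i. coeff p i \<in> \<rat>) \<and> p \<noteq> 0 \<and>
                        degree p = n \<and> poly p x = 0)"

end

theory Submission
  imports Defs "Jordan_Normal_Form.Char_Poly"
begin

(* Write mu_j for the common volume of the tiles of type j. As x \<mapsto> rho O x multiplies volumes
   by rho^d, cutting rho O(R_i) into tiles gives rho^d mu_i = \<Sum>_j a_ij mu_j, where a_ij counts the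
   tiles of type j in the cut (finitely many: they are essentially disjoint, have volume mu_j > 0
   and fill a set of finite volume). So rho^d is an eigenvalue of the integer matrix (a_ij) with the
   nonzero eigenvector (mu_j), hence a root of its monic characteristic polynomial chi of degree N,
   and rho is a root of the monic integer polynomial chi(X^d) of degree N d. The tessellation of
   the whole space is needed only to know that N > 0. *)

(* The library's measure_orthogonal_image needs a well-ordered index type; for an arbitrary
   euclidean_space, invariance under orthogonal maps is derived from the Vitali covering theorem
   and outer regularity. *)
lemma open_Vitali_ball_decomposition:
  fixes U :: "'a::euclidean_space set"
  assumes "open U"
  obtains C :: "('a \<times> real) set"
  where "countable C" "disjoint_family_on (\<lambda>i. ball (fst i) (snd i)) C"
    "(\<Union>i\<in>C. ball (fst i) (snd i)) \<subseteq> U" "negligible (U - (\<Union>i\<in>C. ball (fst i) (snd i)))"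
proof -
  define K where "K = {(x::'a, r::real). 0 < r \<and> ball x r \<subseteq> U}"
  have "\<exists>i. i \<in> K \<and> x \<in> ball (fst i) (snd i) \<and> snd i < d" if "x \<in> U" "0 < d" for x d
  proof -
    obtain e where "e > 0" "ball x e \<subseteq> U"
      using assms \<open>x \<in> U\<close> open_contains_ball by blast
    then show ?thesis
      using \<open>0 < d\<close> by (intro exI[of _ "(x, min e (d/2))"]) (auto simp: K_def)
  qed
  then obtain C where C: "countable C" "C \<subseteq> K"
     "pairwise (\<lambda>i j. disjnt (ball (fst i) (snd i)) (ball (fst j) (snd j))) C"
     "negligible (U - (\<Union>i\<in>C. ball (fst i) (snd i)))"
    by (rule Vitali_covering_theorem_balls[of U K fst snd]) blast
  show thesis
  proof (rule that[OF C(1) _ _ C(4)])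
    show "disjoint_family_on (\<lambda>i. ball (fst i) (snd i)) C"
      using C(3) by (auto simp: disjoint_family_on_def pairwise_def disjnt_def)
    show "(\<Union>i\<in>C. ball (fst i) (snd i)) \<subseteq> U"
    proof (rule UN_least)
      fix i assume "i \<in> C"
      with C(2) have "i \<in> K" by blast
      then show "ball (fst i) (snd i) \<subseteq> U" by (cases i) (simp add: K_def)
    qed
  qed
qed

lemma emeasure_ball_orthogonal_image:
  fixes f :: "'a::euclidean_space \<Rightarrow> 'a"
  assumes "orthogonal_transformation f"
  shows "emeasure lebesgue (f ` ball x r) = emeasure lebesgue (ball x r)"
proof (cases "r \<ge> 0")
  case True
  then show ?thesis
    unfolding image_orthogonal_transformation_ball[OF assms]
    by (simp only: emeasure_lebesgue_ball_conv_unit_ball[OF True, of x]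
        emeasure_lebesgue_ball_conv_unit_ball[OF True, of "f x"])
qed (simp add: ball_empty)

lemma emeasure_orthogonal_image_open_le:
  fixes f :: "'a::euclidean_space \<Rightarrow> 'a"
  assumes f: "orthogonal_transformation f" and U: "open U"
  shows "emeasure lebesgue (f ` U) \<le> emeasure lebesgue U"
proof -
  obtain C where C: "countable C" "disjoint_family_on (\<lambda>i. ball (fst i) (snd i)) C"
    "(\<Union>i\<in>C. ball (fst i) (snd i)) \<subseteq> U" "negligible (U - (\<Union>i\<in>C. ball (fst i) (snd i)))"
    using open_Vitali_ball_decomposition[OF U] by blast
  define B where "B i = ball (fst i) (snd i)" for i :: "'a \<times> real"
  have B_sets: "B i \<in> sets lebesgue" "f ` B i \<in> sets lebesgue" for i
    unfolding B_def image_orthogonal_transformation_ball[OF f] by (simp_all add: fmeasurableD)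
  have disj: "disjoint_family_on (\<lambda>i. f ` B i) C"
    using C(2) orthogonal_transformation_inj[OF f]
    by (auto simp: B_def disjoint_family_on_def image_Int[symmetric])
  have "negligible (f ` (U - (\<Union>i\<in>C. B i)))"
    using C(4) orthogonal_transformation_linear[OF f] unfolding B_def
    by (intro negligible_differentiable_image_negligible) (auto simp: linear_imp_differentiable_on)
  then have null: "f ` (U - (\<Union>i\<in>C. B i)) \<in> null_sets lebesgue"
    by (simp add: negligible_iff_null_sets)
  have UN_sets: "(\<Union>i\<in>C. f ` B i) \<in> sets lebesgue"
    by (rule sets.countable_UN''[OF C(1) B_sets(2)])
  have cover: "f ` U \<subseteq> (\<Union>i\<in>C. f ` B i) \<union> f ` (U - (\<Union>i\<in>C. B i))"
    by blast
  have "emeasure lebesgue (f ` U) \<le> emeasure lebesgue ((\<Union>i\<in>C. f ` B i) \<union> f ` (U - (\<Union>i\<in>C. B i)))"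
    by (rule emeasure_mono[OF cover sets.Un[OF UN_sets null_setsD2[OF null]]])
  also have "\<dots> = emeasure lebesgue (\<Union>i\<in>C. f ` B i)"
    using UN_sets null by (rule emeasure_Un_null_set)
  also have "\<dots> = (\<integral>\<^sup>+i. emeasure lebesgue (f ` B i) \<partial>count_space C)"
    using B_sets(2) C(1) disj by (rule emeasure_UN_countable)
  also have "\<dots> = (\<integral>\<^sup>+i. emeasure lebesgue (B i) \<partial>count_space C)"
    unfolding B_def by (simp only: emeasure_ball_orthogonal_image[OF f])
  also have "\<dots> = emeasure lebesgue (\<Union>i\<in>C. B i)"
    using B_sets(1) C(1) C(2) unfolding B_def by (rule emeasure_UN_countable[symmetric])
  also have "\<dots> \<le> emeasure lebesgue U"
    using C(3) unfolding B_def by (rule emeasure_mono) (simp add: U borel_open sets_completionI_sets)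
  finally show ?thesis .
qed

lemma sets_lebesgue_linear_image:
  fixes f :: "'a::euclidean_space \<Rightarrow> 'a"
  assumes "linear f" and "S \<in> sets lebesgue"
  shows "f ` S \<in> sets lebesgue"
  using assms by (intro differentiable_image_in_sets_lebesgue) (auto simp: linear_imp_differentiable_on)

lemma emeasure_orthogonal_image_le:
  fixes f :: "'a::euclidean_space \<Rightarrow> 'a"
  assumes f: "orthogonal_transformation f" and S: "S \<in> sets lebesgue"
  shows "emeasure lebesgue (f ` S) \<le> emeasure lebesgue S"
proof (rule ennreal_le_epsilon)
  fix e :: real assume "0 < e"
  then obtain T where T: "open T" "S \<subseteq> T" "T - S \<in> lmeasurable" "emeasure lebesgue (T - S) < ennreal e"
    using sets_lebesgue_outer_open[OF S] by metis
  have T_sets: "T \<in> sets lebesgue"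
    using T(1) by (simp add: borel_open sets_completionI_sets)
  have "emeasure lebesgue (f ` S) \<le> emeasure lebesgue (f ` T)"
    using T(2) T_sets f
    by (intro emeasure_mono sets_lebesgue_linear_image image_mono) (auto simp: orthogonal_transformation_linear)
  also have "\<dots> \<le> emeasure lebesgue T"
    by (rule emeasure_orthogonal_image_open_le[OF f T(1)])
  also have "\<dots> \<le> emeasure lebesgue S + emeasure lebesgue (T - S)"
    using T(2) S T(3) by (metis Un_Diff_cancel sup.absorb2 emeasure_subadditive fmeasurableD)
  also have "\<dots> \<le> emeasure lebesgue S + ennreal e"
    using T(4) by (intro add_left_mono) simp
  finally show "emeasure lebesgue (f ` S) \<le> emeasure lebesgue S + ennreal e" .
qed

lemma emeasure_orthogonal_image:
  fixes f :: "'a::euclidean_space \<Rightarrow> 'a"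
  assumes f: "orthogonal_transformation f" and S: "S \<in> sets lebesgue"
  shows "emeasure lebesgue (f ` S) = emeasure lebesgue S"
proof (rule antisym)
  show "emeasure lebesgue (f ` S) \<le> emeasure lebesgue S"
    by (rule emeasure_orthogonal_image_le[OF f S])
  have "inv_into UNIV f ` f ` S = S"
    using orthogonal_transformation_inj[OF f] by (simp add: image_inv_f_f)
  moreover have "f ` S \<in> sets lebesgue"
    using f S by (simp add: sets_lebesgue_linear_image orthogonal_transformation_linear)
  ultimately show "emeasure lebesgue S \<le> emeasure lebesgue (f ` S)"
    using emeasure_orthogonal_image_le[OF orthogonal_transformation_inv[OF f]] by metis
qed

lemma
  fixes f :: "'a::euclidean_space \<Rightarrow> 'a"
  assumes f: "orthogonal_transformation f" and S: "S \<in> lmeasurable"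
  shows lmeasurable_scaled_orthogonal_image: "(\<lambda>x. c *\<^sub>R f x) ` S \<in> lmeasurable"
    and measure_scaled_orthogonal_image:
      "measure lebesgue ((\<lambda>x. c *\<^sub>R f x) ` S) = \<bar>c\<bar> ^ DIM('a) * measure lebesgue S"
proof -
  have fS: "f ` S \<in> sets lebesgue"
    using f S by (simp add: sets_lebesgue_linear_image orthogonal_transformation_linear fmeasurableD)
  have image_eq: "(\<lambda>x. c *\<^sub>R f x) ` S = (\<lambda>x. c *\<^sub>R x + 0) ` (f ` S)"
    by (simp add: image_image)
  have emeasure_eq: "emeasure lebesgue ((\<lambda>x. c *\<^sub>R f x) ` S) = ennreal (\<bar>c\<bar> ^ DIM('a)) * emeasure lebesgue S"
    unfolding image_eq emeasure_lebesgue_affine emeasure_orthogonal_image[OF f fmeasurableD[OF S]] ..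
  show "(\<lambda>x. c *\<^sub>R f x) ` S \<in> lmeasurable"
  proof (rule fmeasurableI)
    show "(\<lambda>x. c *\<^sub>R f x) ` S \<in> sets lebesgue"
      using fS unfolding image_eq by (rule sets_lebesgue_linear_image[rotated]) (simp add: linear_scale_self)
    show "emeasure lebesgue ((\<lambda>x. c *\<^sub>R f x) ` S) < \<infinity>"
      using S by (simp add: emeasure_eq emeasure_eq_measure2 ennreal_mult_less_top)
  qed
  show "measure lebesgue ((\<lambda>x. c *\<^sub>R f x) ` S) = \<bar>c\<bar> ^ DIM('a) * measure lebesgue S"
    by (simp add: measure_def emeasure_eq enn2real_mult)
qed

lemma is_tile_iff: "is_tile S \<longleftrightarrow> S \<in> lmeasurable \<and> 0 < measure lebesgue S"
proof (cases "S \<in> lmeasurable")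
  case True
  then show ?thesis
    by (simp add: is_tile_def emeasure_eq_measure2 fmeasurableD)
qed (auto simp: is_tile_def fmeasurable_def)

lemma pairwise_ess_disjoint_iff_negligible:
  "pairwise_ess_disjoint \<F> \<longleftrightarrow> pairwise (\<lambda>S T. negligible (S \<inter> T)) \<F>"
  by (simp add: pairwise_ess_disjoint_def ess_disjoint_def pairwise_def negligible_iff_null_sets)

lemma tessellation_types_nonempty:
  assumes "tessellation N tp \<T>"
  shows "0 < N"
proof (rule ccontr)
  assume "\<not> 0 < N"
  with assms have "\<T> = {}"
    by (auto simp: tessellation_def)
  with assms show False
    by (simp add: tessellation_def)
qed

lemma finite_ess_disjoint_family_measure_ge:
  fixes \<F> :: "'a::euclidean_space set set"
  assumes disj: "pairwise_ess_disjoint \<F>"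
    and meas: "\<And>S. S \<in> \<F> \<Longrightarrow> S \<in> lmeasurable"
    and ge: "\<And>S. S \<in> \<F> \<Longrightarrow> \<delta> \<le> measure lebesgue S" and "0 < \<delta>"
    and T: "\<Union>\<F> \<subseteq> T" "T \<in> lmeasurable"
  shows "finite \<F>"
proof (rule finite_if_finite_subsets_card_bdd[THEN conjunct1])
  fix \<G> assume \<G>: "\<G> \<subseteq> \<F>" "finite \<G>"
  have "real (card \<G>) * \<delta> = (\<Sum>S\<in>\<G>. \<delta>)"
    by simp
  also have "\<dots> \<le> (\<Sum>S\<in>\<G>. measure lebesgue S)"
    using \<G> ge by (intro sum_mono) auto
  also have "\<dots> = measure lebesgue (\<Union>\<G>)"
    using \<G> meas disj pairwise_subset
    by (intro measure_negligible_finite_Union[symmetric]) (auto simp: pairwise_ess_disjoint_iff_negligible)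
  also have "\<dots> \<le> measure lebesgue T"
    using \<G> meas T by (intro measure_mono_fmeasurable) auto
  finally have "real (card \<G>) \<le> measure lebesgue T / \<delta>"
    using \<open>0 < \<delta>\<close> by (simp add: field_simps)
  then show "card \<G> \<le> nat \<lceil>measure lebesgue T / \<delta>\<rceil>"
    by linarith
qed

lemma measure_Union_by_type:
  fixes \<F> :: "'a::euclidean_space set set" and tp :: "nat \<Rightarrow> 'a set \<Rightarrow> bool"
  assumes disj: "pairwise_ess_disjoint \<F>"
    and typed: "\<And>S. S \<in> \<F> \<Longrightarrow> \<exists>j<N. tp j S"
    and type_unique: "\<And>j k S. j < N \<Longrightarrow> k < N \<Longrightarrow> tp j S \<Longrightarrow> tp k S \<Longrightarrow> j = k"
    and type_measure: "\<And>j S. j < N \<Longrightarrow> tp j S \<Longrightarrow> S \<in> lmeasurable \<and> measure lebesgue S = \<mu> j"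
    and pos: "\<And>j. j < N \<Longrightarrow> 0 < \<mu> j"
    and U: "\<Union>\<F> \<in> lmeasurable"
  shows "measure lebesgue (\<Union>\<F>) = (\<Sum>j<N. real (card {S\<in>\<F>. tp j S}) * \<mu> j)"
proof -
  define \<F>\<^sub>t where "\<F>\<^sub>t j = {S\<in>\<F>. tp j S}" for j
  have \<F>_eq: "\<F> = (\<Union>j<N. \<F>\<^sub>t j)"
    using typed by (auto simp: \<F>\<^sub>t_def)
  have fin: "finite (\<F>\<^sub>t j)" if "j < N" for j
  proof (rule finite_ess_disjoint_family_measure_ge[where \<delta> = "\<mu> j" and T = "\<Union>\<F>"])
    show "pairwise_ess_disjoint (\<F>\<^sub>t j)"
      using disj by (auto simp: \<F>\<^sub>t_def pairwise_ess_disjoint_def)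
  qed (use that type_measure pos U in \<open>auto simp: \<F>\<^sub>t_def\<close>)
  have "measure lebesgue (\<Union>\<F>) = (\<Sum>S\<in>\<F>. measure lebesgue S)"
  proof (rule measure_negligible_finite_Union)
    show "finite \<F>"
      using fin by (subst \<F>_eq) auto
    show "pairwise (\<lambda>S T. negligible (S \<inter> T)) \<F>"
      using disj by (simp add: pairwise_ess_disjoint_iff_negligible)
  qed (use typed type_measure in blast)
  also have "\<dots> = (\<Sum>j<N. \<Sum>S\<in>\<F>\<^sub>t j. measure lebesgue S)"
    unfolding \<F>_eq by (rule sum.UNION_disjoint) (use fin in \<open>auto simp: \<F>\<^sub>t_def dest: type_unique\<close>)
  also have "\<dots> = (\<Sum>j<N. real (card (\<F>\<^sub>t j)) * \<mu> j)"
    by (intro sum.cong refl) (simp add: \<F>\<^sub>t_def type_measure)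
  finally show ?thesis
    by (simp add: \<F>\<^sub>t_def)
qed

lemma inflationary_representative_is_tile:
  assumes "tile_types N tp" and "inflationary N tp R \<rho> Ot" and "j < N"
  shows "is_tile (R j)"
  using assms by (auto simp: tile_types_def inflationary_def)

lemma inflationary_measure_equation:
  fixes tp :: "nat \<Rightarrow> 'a::euclidean_space set \<Rightarrow> bool"
  assumes types: "tile_types N tp"
    and same_type_iff_same_measure:
      "\<And>i j S S'. i < N \<Longrightarrow> j < N \<Longrightarrow> tp i S \<Longrightarrow> tp j S' \<Longrightarrow>
         (i = j \<longleftrightarrow> emeasure lebesgue S = emeasure lebesgue S')"
    and infl: "inflationary N tp R \<rho> Ot"
    and orth: "orthogonal_transformation Ot"
  obtains a :: "nat \<Rightarrow> nat \<Rightarrow> nat" where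
    "\<And>i. i < N \<Longrightarrow>
       \<bar>\<rho>\<bar> ^ DIM('a) * measure lebesgue (R i) = (\<Sum>j<N. real (a i j) * measure lebesgue (R j))"
proof -
  have R: "tp j (R j)" "R j \<in> lmeasurable" "0 < measure lebesgue (R j)" if "j < N" for j
    using infl that inflationary_representative_is_tile[OF types infl that]
    by (auto simp: inflationary_def is_tile_iff)
  have type_measure: "S \<in> lmeasurable \<and> measure lebesgue S = measure lebesgue (R j)"
    if "j < N" "tp j S" for j S
  proof
    show "S \<in> lmeasurable"
      using types that by (auto simp: tile_types_def is_tile_iff)
    then show "measure lebesgue S = measure lebesgue (R j)"
      using same_type_iff_same_measure[OF that(1) that(1) that(2) R(1)[OF that(1)]]
      by (simp add: measure_def)
  qed
  have "\<exists>c. \<bar>\<rho>\<bar> ^ DIM('a) * measure lebesgue (R i) = (\<Sum>j<N. real (c j) * measure lebesgue (R j))"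
    if "i < N" for i
  proof -
    obtain \<S> where \<S>: "pairwise_ess_disjoint \<S>" "\<And>S. S \<in> \<S> \<Longrightarrow> \<exists>j<N. tp j S"
      and image_eq: "\<Union>\<S> = (\<lambda>x. \<rho> *\<^sub>R Ot x) ` R i"
      using infl \<open>i < N\<close> by (auto simp: inflationary_def)
    have "\<bar>\<rho>\<bar> ^ DIM('a) * measure lebesgue (R i) = measure lebesgue (\<Union>\<S>)"
      unfolding image_eq by (rule measure_scaled_orthogonal_image[OF orth R(2)[OF that], symmetric])
    also have "\<dots> = (\<Sum>j<N. real (card {S\<in>\<S>. tp j S}) * measure lebesgue (R j))"
    proof (rule measure_Union_by_type[OF \<S>])
      show "\<Union>\<S> \<in> lmeasurable"
        unfolding image_eq by (rule lmeasurable_scaled_orthogonal_image[OF orth R(2)[OF that]])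
      show "j = k" if "j < N" "k < N" "tp j S" "tp k S" for j k S
        using same_type_iff_same_measure[OF that] by simp
    qed (use type_measure R(3) in auto)
    finally show ?thesis
      by (rule exI[where x = "\<lambda>j. card {S\<in>\<S>. tp j S}"])
  qed
  then show thesis
    using that by metis
qed

lemma root_of_monic_int_poly_if_eigenvector:
  fixes A :: "nat \<Rightarrow> nat \<Rightarrow> int" and v :: "nat \<Rightarrow> 'a::field_char_0"
  assumes "k < n" "v k \<noteq> 0"
    and eigen: "\<And>i. i < n \<Longrightarrow> x * v i = (\<Sum>j<n. of_int (A i j) * v j)"
  obtains p :: "int poly" where "degree p = n" "lead_coeff p = 1" "poly (map_poly of_int p) x = 0"
proof -
  define M where "M = Matrix.mat n n (\<lambda>(i, j). A i j)"
  have M: "M \<in> carrier_mat n n"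
    by (simp add: M_def)
  define M\<^sub>a where "M\<^sub>a = map_mat (of_int :: int \<Rightarrow> 'a) M"
  have M\<^sub>a: "M\<^sub>a \<in> carrier_mat n n"
    using M by (simp add: M\<^sub>a_def)
  define w where "w = Matrix.vec n v"
  have "eigenvector M\<^sub>a w x"
    unfolding eigenvector_def
  proof (intro conjI)
    show "w \<in> carrier_vec (dim_row M\<^sub>a)"
      using M\<^sub>a by (simp add: w_def)
    show "w \<noteq> 0\<^sub>v (dim_row M\<^sub>a)"
      using assms(1,2) M\<^sub>a by (auto simp: w_def dest: arg_cong[where f = "\<lambda>u. vec_index u k"])
    show "M\<^sub>a *\<^sub>v w = x \<cdot>\<^sub>v w"
      by (rule eq_vecI)
        (auto simp: M\<^sub>a_def M_def w_def scalar_prod_def lessThan_atLeast0 eigen mult.commute)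
  qed
  then have "poly (char_poly M\<^sub>a) x = 0"
    using eigenvalue_root_char_poly[OF M\<^sub>a] by (auto simp: eigenvalue_def)
  moreover have "char_poly M\<^sub>a = map_poly of_int (char_poly M)"
    unfolding M\<^sub>a_def by (rule of_int_hom.char_poly_hom[OF M])
  ultimately have "poly (map_poly of_int (char_poly M)) x = 0"
    by simp
  with degree_monic_char_poly[OF M] show thesis
    by (intro that) auto
qed

lemma algebraic_int_alg_degree_le_if_power_root:
  fixes p :: "int poly" and x :: real
  assumes lc: "lead_coeff p = 1" and root: "poly (map_poly of_int p) (x ^ d) = 0" and "0 < d"
  shows "algebraic_int x \<and> alg_degree x \<le> degree p * d"
proof -
  define q :: "real poly" where "q = pcompose (map_poly of_int p) (monom 1 d)"
  have deg_p: "degree (map_poly (of_int :: int \<Rightarrow> real) p) = degree p"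
    by (simp add: degree_map_poly)
  have deg_q: "degree q = degree p * d"
    by (simp add: q_def degree_pcompose deg_p degree_monom_eq)
  have lc_q: "lead_coeff q = 1"
    unfolding q_def using \<open>0 < d\<close> lc
    by (subst lead_coeff_comp) (simp_all add: degree_monom_eq deg_p coeff_map_poly)
  have int_q: "coeff q i \<in> \<int>" for i
    unfolding q_def
    by (rule coeff_pcompose_semiring_closed[of \<int>]) (auto simp: coeff_map_poly coeff_monom)
  have root_q: "poly q x = 0"
    using root by (simp add: q_def poly_pcompose poly_monom)
  have "algebraic_int x"
    using lc_q int_q root_q by (intro algebraic_int.intros[of q]) auto
  moreover have "alg_degree x \<le> degree q"
    unfolding alg_degree_def
  proof (rule Least_le, intro exI conjI)
    show "\<forall>i. coeff q i \<in> \<rat>"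
      using int_q Ints_subset_Rats by blast
    show "q \<noteq> 0"
      using lc_q by auto
  qed (use root_q in auto)
  ultimately show ?thesis
    using deg_q by simp
qed

theorem mainTheorem2:
  fixes N :: nat
    and tp :: "nat \<Rightarrow> (real ^ 'd) set \<Rightarrow> bool"
    and \<T> :: "(real ^ 'd) set set"
    and R :: "nat \<Rightarrow> (real ^ 'd) set"
    and \<rho> :: real
    and Ot :: "real ^ 'd \<Rightarrow> real ^ 'd"
  assumes tess: "tessellation N tp \<T>"
    and same_type_iff_same_measure:
      "\<And>i j S S'. i < N \<Longrightarrow> j < N \<Longrightarrow> tp i S \<Longrightarrow> tp j S' \<Longrightarrow>
         (i = j \<longleftrightarrow> emeasure lebesgue S = emeasure lebesgue S')"
    and infl: "inflationary N tp R \<rho> Ot"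
    and rho: "\<rho> > 1"
    and orth: "orthogonal_transformation Ot"
  shows "algebraic_int \<rho> \<and> alg_degree \<rho> \<le> N * CARD('d)"
proof -
  have types: "tile_types N tp" and "0 < N"
    using tess tessellation_types_nonempty by (auto simp: tessellation_def)
  obtain a where a: "\<And>i. i < N \<Longrightarrow>
      \<rho> ^ CARD('d) * measure lebesgue (R i) = (\<Sum>j<N. real (a i j) * measure lebesgue (R j))"
    using inflationary_measure_equation[OF types same_type_iff_same_measure infl orth] rho by auto
  have "measure lebesgue (R 0) \<noteq> 0"
    using inflationary_representative_is_tile[OF types infl \<open>0 < N\<close>] by (simp add: is_tile_iff)
  then obtain p :: "int poly" where "degree p = N" "lead_coeff p = 1"
      "poly (map_poly of_int p) (\<rho> ^ CARD('d)) = 0"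
    using root_of_monic_int_poly_if_eigenvector[of 0 N "\<lambda>j. measure lebesgue (R j)" "\<rho> ^ CARD('d)" a]
      \<open>0 < N\<close> a by auto
  then show ?thesis
    using algebraic_int_alg_degree_le_if_power_root[of p \<rho> "CARD('d)"] by simp
qed

end
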